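(* Let $X=[0,\infty)\subset\mathbb{R}$ and $\mathcal{A}=\{\alpha_1,\dots,\alpha_m\}\subset\mathbb{R}$ with $\alpha_1<\cdots<\alpha_m$; identify $\mathbb{R}^{\mathcal{A}}$ with $\mathbb{R}^m$ (index $i$ for $\alpha_i$), with standard basis $\delta_1,\dots,\delta_m$. Then the normalized $X$-circuits of $\mathcal{A}$ are exactly the vectors of the following two types: (1) $\lambda=\delta_k-\delta_j$ with $1\le j<k\le m$; (2) for $1\le i<j<k\le m$, \[\lambda=\frac{\alpha_j-\alpha_i}{\alpha_k-\alpha_i}\,\delta_k+\frac{\alpha_k-\alpha_j}{\alpha_k-\alpha_i}\,\delta_i-\delta_j.\]
   Context: For a nonempty closed convex $X\subset\mathbb{R}^n$ and nonempty finite $\mathcal{A}\subset\mathbb{R}^n$: $\mathcal{A}\nu=\sum_\alpha\alpha\nu_\alpha$ for $\nu\in\mathbb{R}^{\mathcal{A}}$; $\sigma_X(y)=\sup\{y^Tx:x\in X\}\in\mathbb{R}\cup\{+\infty\}$; for $\beta\in\mathcal{A}$, $N_\beta=\{\nu\in\mathbb{R}^{\mathcal{A}}:\nu_\alpha\ge0\ \forall\alpha\neq\beta,\ \sum_\alpha\nu_\alpha=0\}$. A vector $\nu^\star\in N_\beta$ is an $X$-circuit of $\mathcal{A}$ if (1) $\nu^\star\neq0$, (2) $\sigma_X(-\mathcal{A}\nu^\star)<\infty$, and (3) $\nu^\star$ cannot be written as a convex combination of two non-proportional vectors $\nu^{(1)},\nu^{(2)}\in N_\beta$ such that the map $\nu\mapsto\sigma_X(-\mathcal{A}\nu)$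 is affine on the segment $[\nu^{(1)},\nu^{(2)}]$. An $X$-circuit is normalized if its unique negative entry equals $-1$. *)

theory Defs
  imports "HOL-Analysis.Analysis"
begin

text \<open>Vectors in R^A are represented as functions nu :: 'a => real that vanish outside A.\<close>

definition lin_comb :: "'a::euclidean_space set \<Rightarrow> ('a \<Rightarrow> real) \<Rightarrow> 'a" where
  "lin_comb A \<nu> = (\<Sum>\<alpha>\<in>A. \<nu> \<alpha> *\<^sub>R \<alpha>)"

definition support_fn :: "'a::euclidean_space set \<Rightarrow> 'a \<Rightarrow> ereal" where
  "support_fn X y = (SUP x\<in>X. ereal (inner y x))"

definition Ncone :: "'a set \<Rightarrow> 'a \<Rightarrow> ('a \<Rightarrow> real) set" where
  "Ncone A \<beta> = {\<nu>. (\<forall>\<alpha>. \<alpha> \<notin> A \<longrightarrow> \<nu> \<alpha> = 0) \<and> (\<forall>\<alpha>\<in>A. \<alpha> \<noteq> \<beta> \<longrightarrow> \<nu> \<alpha> \<ge> 0)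
                  \<and> (\<Sum>\<alpha>\<in>A. \<nu> \<alpha>) = 0}"

definition seg_pt :: "('a \<Rightarrow> real) \<Rightarrow> ('a \<Rightarrow> real) \<Rightarrow> real \<Rightarrow> 'a \<Rightarrow> real" where
  "seg_pt \<nu>1 \<nu>2 t = (\<lambda>\<alpha>. (1 - t) * \<nu>1 \<alpha> + t * \<nu>2 \<alpha>)"

definition affine_on_seg :: "'a::euclidean_space set \<Rightarrow> 'a set \<Rightarrow> ('a \<Rightarrow> real) \<Rightarrow> ('a \<Rightarrow> real) \<Rightarrow> bool" where
  "affine_on_seg X A \<nu>1 \<nu>2 \<longleftrightarrow>
     (\<exists>a b::real. \<forall>t\<in>{0..1}. support_fn X (- lin_comb A (seg_pt \<nu>1 \<nu>2 t)) = ereal (a + b * t))"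

definition proportional :: "('a \<Rightarrow> real) \<Rightarrow> ('a \<Rightarrow> real) \<Rightarrow> bool" where
  "proportional \<nu>1 \<nu>2 \<longleftrightarrow> (\<exists>c. \<nu>1 = (\<lambda>\<alpha>. c * \<nu>2 \<alpha>)) \<or> (\<exists>c. \<nu>2 = (\<lambda>\<alpha>. c * \<nu>1 \<alpha>))"

definition X_circuit_at :: "'a::euclidean_space set \<Rightarrow> 'a set \<Rightarrow> 'a \<Rightarrow> ('a \<Rightarrow> real) \<Rightarrow> bool" where
  "X_circuit_at X A \<beta> \<nu> \<longleftrightarrow> \<nu> \<in> Ncone A \<beta> \<and> \<nu> \<noteq> (\<lambda>_. 0)
     \<and> support_fn X (- lin_comb A \<nu>) < \<infinity>
     \<and> \<not> (\<exists>\<nu>1 \<nu>2 t. \<nu>1 \<in> Ncone A \<beta> \<and> \<nu>2 \<in> Ncone A \<beta> \<and> \<not> proportional \<nu>1 \<nu>2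
             \<and> t \<in> {0<..<1} \<and> \<nu> = seg_pt \<nu>1 \<nu>2 t \<and> affine_on_seg X A \<nu>1 \<nu>2)"

definition X_circuit :: "'a::euclidean_space set \<Rightarrow> 'a set \<Rightarrow> ('a \<Rightarrow> real) \<Rightarrow> bool" where
  "X_circuit X A \<nu> \<longleftrightarrow> (\<exists>\<beta>\<in>A. X_circuit_at X A \<beta> \<nu>)"

definition normalized_X_circuit :: "'a::euclidean_space set \<Rightarrow> 'a set \<Rightarrow> ('a \<Rightarrow> real) \<Rightarrow> bool" where
  "normalized_X_circuit X A \<nu> \<longleftrightarrow> X_circuit X A \<nu> \<and> (\<forall>\<alpha>\<in>A. \<nu> \<alpha> < 0 \<longrightarrow> \<nu> \<alpha> = -1)"

end

theory Submission
  imports Defs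
begin

text \<open>
  For \<open>X = [0, \<infinity>)\<close> the support function \<open>\<sigma>\<^sub>X(y)\<close> is \<open>0\<close> for \<open>y \<le> 0\<close> and \<open>\<infinity>\<close> otherwise.
  Hence \<open>\<sigma>\<^sub>X(-\<A>\<nu>)\<close> is finite exactly when the moment \<open>\<Sum>\<^sub>a \<nu>\<^sub>a a\<close> is nonnegative, and it is affine
  on a segment exactly when both endpoints have nonnegative moment.  So the \<open>X\<close>-circuits at \<open>\<beta>\<close> are the
  nonzero vectors on extreme rays of the polyhedral cone \<open>N\<^sub>\<beta> \<inter> {moment \<ge> 0}\<close>.

  A vector of this cone with the normalization \<open>\<nu>\<^sub>\<beta> = -1\<close> is extremal iff no small symmetric
  perturbation \<open>\<nu> \<plusminus> \<epsilon>w\<close> stays in the cone.  Three positive entries admit such a \<open>w\<close> preserving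
  mass and moment; two positive entries with positive moment admit \<open>w = \<delta>\<^sub>c - \<delta>\<^sub>\<beta>\<close>.  What remains is a
  single positive entry \<open>c > \<beta>\<close> (type 1), or two entries \<open>p < \<beta> < q\<close> with zero moment, whose
  weights are then forced (type 2).  Conversely the constraints active at these vectors
  determine them up to scaling, so they are extremal.
\<close>

lemma lin_comb_lincomb:
  "lin_comb A (\<lambda>a. x * \<nu> a + y * \<mu> a) = x *\<^sub>R lin_comb A \<nu> + y *\<^sub>R lin_comb A \<mu>"
  by (simp add: lin_comb_def scaleR_add_left scaleR_right.sum sum.distrib)

lemma lin_comb_real: "lin_comb A \<nu> = (\<Sum>a\<in>A. \<nu> a * a)"
  by (simp add: lin_comb_def)

lemma sum_lincomb:
  fixes \<nu> \<mu> :: "'a \<Rightarrow> real"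
  shows "(\<Sum>a\<in>A. x * \<nu> a + y * \<mu> a) = x * sum \<nu> A + y * sum \<mu> A"
  by (simp only: sum.distrib sum_distrib_left)

lemma sum_two_point_support:
  assumes "finite A" "b \<in> A" "c \<in> A" "b \<noteq> c" "\<forall>a. a \<notin> {b, c} \<longrightarrow> f a = 0"
  shows "sum f A = f b + f c"
proof -
  have "sum f A = sum f {b, c}"
    using assms by (intro sum.mono_neutral_right) auto
  with assms show ?thesis by simp
qed

lemma sum_three_point_support:
  assumes "finite A" "p \<in> A" "b \<in> A" "c \<in> A" "p \<noteq> b" "p \<noteq> c" "b \<noteq> c"
    and "\<forall>a. a \<notin> {p, b, c} \<longrightarrow> f a = 0"
  shows "sum f A = f p + f b + f c"
proof -
  have "sum f A = sum f {p, b, c}"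
    using assms by (intro sum.mono_neutral_right) auto
  with assms show ?thesis by (simp add: add.assoc)
qed

lemma support_fn_nonneg_reals:
  "support_fn {x::real. 0 \<le> x} y = (if y \<le> 0 then 0 else \<infinity>)"
proof (cases "y \<le> 0")
  case True
  have "(SUP x\<in>{x::real. 0 \<le> x}. ereal (y * x)) = 0"
  proof (rule antisym)
    show "(SUP x\<in>{x::real. 0 \<le> x}. ereal (y * x)) \<le> 0"
      using True by (intro SUP_least) (auto simp: mult_nonpos_nonneg)
    show "0 \<le> (SUP x\<in>{x::real. 0 \<le> x}. ereal (y * x))"
      using SUP_upper[of 0 "{x::real. 0 \<le> x}" "\<lambda>x. ereal (y * x)"] by (simp add: zero_ereal_def)
  qed
  with True show ?thesis by (simp add: support_fn_def)
next
  case False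
  have "(SUP x\<in>{x::real. 0 \<le> x}. ereal (y * x)) = \<infinity>"
  proof (rule SUP_PInfty)
    fix n :: nat
    have "real n / y \<in> {x. 0 \<le> x}" "ereal (real n) \<le> ereal (y * (real n / y))"
      using False by simp_all
    then show "\<exists>x\<in>{x::real. 0 \<le> x}. ereal (real n) \<le> ereal (y * x)" by blast
  qed
  with False show ?thesis by (simp add: support_fn_def)
qed

lemma support_fn_nonneg_reals_finite_iff:
  "support_fn {x::real. 0 \<le> x} (- lin_comb A \<nu>) < \<infinity> \<longleftrightarrow> 0 \<le> lin_comb A \<nu>"
  by (simp add: support_fn_nonneg_reals)

lemma affine_on_seg_nonneg_reals_iff:
  "affine_on_seg {x::real. 0 \<le> x} A \<nu>1 \<nu>2 \<longleftrightarrow> 0 \<le> lin_comb A \<nu>1 \<and> 0 \<le> lin_comb A \<nu>2"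
proof
  assume "affine_on_seg {x::real. 0 \<le> x} A \<nu>1 \<nu>2"
  then obtain a b where "\<forall>t\<in>{0..1}. support_fn {x::real. 0 \<le> x} (- lin_comb A (seg_pt \<nu>1 \<nu>2 t)) = ereal (a + b * t)"
    unfolding affine_on_seg_def by blast
  from this[rule_format, of 0] this[rule_format, of 1]
  show "0 \<le> lin_comb A \<nu>1 \<and> 0 \<le> lin_comb A \<nu>2"
    by (auto simp: seg_pt_def support_fn_nonneg_reals split: if_splits)
next
  assume L: "0 \<le> lin_comb A \<nu>1 \<and> 0 \<le> lin_comb A \<nu>2"
  show "affine_on_seg {x::real. 0 \<le> x} A \<nu>1 \<nu>2"
    unfolding affine_on_seg_def
  proof (intro exI ballI)
    fix t :: real
    assume "t \<in> {0..1}"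
    with L have "0 \<le> (1 - t) * lin_comb A \<nu>1 + t * lin_comb A \<nu>2"
      by (intro add_nonneg_nonneg mult_nonneg_nonneg) auto
    then show "support_fn {x. 0 \<le> x} (- lin_comb A (seg_pt \<nu>1 \<nu>2 t)) = ereal (0 + 0 * t)"
      by (simp add: seg_pt_def lin_comb_lincomb support_fn_nonneg_reals zero_ereal_def)
  qed
qed

definition moment_cone :: "real set \<Rightarrow> real \<Rightarrow> (real \<Rightarrow> real) set" where
  "moment_cone A \<beta> = {\<nu> \<in> Ncone A \<beta>. 0 \<le> lin_comb A \<nu>}"

definition indecomposable_in :: "('a \<Rightarrow> real) set \<Rightarrow> ('a \<Rightarrow> real) \<Rightarrow> bool" where
  "indecomposable_in C \<nu> \<longleftrightarrow>
     \<not> (\<exists>\<nu>1 \<nu>2 t. \<nu>1 \<in> C \<and> \<nu>2 \<in> C \<and> \<not> proportional \<nu>1 \<nu>2 \<and> t \<in> {0<..<1} \<and> \<nu> = seg_pt \<nu>1 \<nu>2 t)"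

lemma X_circuit_at_nonneg_reals_iff:
  "X_circuit_at {x::real. 0 \<le> x} A \<beta> \<nu> \<longleftrightarrow>
     \<nu> \<in> moment_cone A \<beta> \<and> \<nu> \<noteq> (\<lambda>_. 0) \<and> indecomposable_in (moment_cone A \<beta>) \<nu>"
  unfolding X_circuit_at_def moment_cone_def indecomposable_in_def
    support_fn_nonneg_reals_finite_iff affine_on_seg_nonneg_reals_iff
  by blast

lemma seg_pt_swap: "seg_pt \<nu>1 \<nu>2 t = seg_pt \<nu>2 \<nu>1 (1 - t)"
  by (simp add: seg_pt_def add.commute)

lemma indecomposable_inI:
  assumes "\<And>\<mu> \<mu>' t. \<mu> \<in> C \<Longrightarrow> \<mu>' \<in> C \<Longrightarrow> t \<in> {0<..<1} \<Longrightarrow> \<nu> = seg_pt \<mu> \<mu>' t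
             \<Longrightarrow> \<exists>s. \<mu> = (\<lambda>a. s * \<nu> a)"
  shows "indecomposable_in C \<nu>"
  unfolding indecomposable_in_def
proof clarify
  fix \<nu>1 \<nu>2 t
  assume \<nu>1: "\<nu>1 \<in> C" and \<nu>2: "\<nu>2 \<in> C" and t: "t \<in> {0<..<1}" and "\<not> proportional \<nu>1 \<nu>2"
    and \<nu>: "\<nu> = seg_pt \<nu>1 \<nu>2 t"
  obtain s1 where s1: "\<nu>1 = (\<lambda>a. s1 * \<nu> a)"
    using assms[OF \<nu>1 \<nu>2 t \<nu>] by blast
  obtain s2 where s2: "\<nu>2 = (\<lambda>a. s2 * \<nu> a)"
    using assms[OF \<nu>2 \<nu>1 _ \<nu>[unfolded seg_pt_swap[of \<nu>1]]] t by auto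
  have "proportional \<nu>1 \<nu>2"
  proof (cases "s1 = 0")
    case True
    with s1 have "\<nu>1 = (\<lambda>a. 0 * \<nu>2 a)" by simp
    then show ?thesis unfolding proportional_def by blast
  next
    case False
    with s1 s2 have "\<nu>2 = (\<lambda>a. (s2 / s1) * \<nu>1 a)" by auto
    then show ?thesis unfolding proportional_def by blast
  qed
  with \<open>\<not> proportional \<nu>1 \<nu>2\<close> show False ..
qed

lemma not_indecomposable_if_perturbable:
  assumes plus: "(\<lambda>a. \<nu> a + w a) \<in> C" and minus: "(\<lambda>a. \<nu> a - w a) \<in> C"
    and x: "\<nu> x \<noteq> 0" "w x = 0" and y: "w y \<noteq> 0"
  shows "\<not> indecomposable_in C \<nu>"
proof -
  have "\<not> proportional (\<lambda>a. \<nu> a + w a) (\<lambda>a. \<nu> a - w a)"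
    unfolding proportional_def
  proof (intro notI, elim disjE exE)
    fix c assume "(\<lambda>a. \<nu> a + w a) = (\<lambda>a. c * (\<nu> a - w a))"
    from fun_cong[OF this, of x] fun_cong[OF this, of y] x y show False
      by (smt (verit) mult_cancel_right1)
  next
    fix c assume "(\<lambda>a. \<nu> a - w a) = (\<lambda>a. c * (\<nu> a + w a))"
    from fun_cong[OF this, of x] fun_cong[OF this, of y] x y show False
      by (smt (verit) mult_cancel_right1)
  qed
  moreover have "\<nu> = seg_pt (\<lambda>a. \<nu> a + w a) (\<lambda>a. \<nu> a - w a) (1/2)"
    by (rule ext) (simp add: seg_pt_def field_simps)
  moreover have "1/2 \<in> {0<..<1::real}" by simp
  ultimately show ?thesis
    using plus minus unfolding indecomposable_in_def by blast
qed

lemma eventually_abs_mult_le: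
  fixes c r :: real
  assumes "c = 0 \<and> 0 \<le> r \<or> 0 < r"
  shows "\<forall>\<^sub>F \<epsilon> in at_right 0. \<bar>\<epsilon> * c\<bar> \<le> r"
  using assms
proof
  assume "0 < r"
  have "((\<lambda>\<epsilon>. \<bar>\<epsilon> * c\<bar>) \<longlongrightarrow> \<bar>0 * c\<bar>) (at_right 0)"
    by (intro tendsto_intros)
  with \<open>0 < r\<close> have "\<forall>\<^sub>F \<epsilon> in at_right 0. \<bar>\<epsilon> * c\<bar> < r"
    by (intro order_tendstoD(2)) auto
  then show ?thesis
    by (rule eventually_mono) simp
qed simp

lemma moment_cone_perturbation:
  assumes fin: "finite A" and \<nu>: "\<nu> \<in> moment_cone A \<beta>"
    and w_out: "\<forall>a. a \<notin> A \<longrightarrow> w a = 0" and w_sum: "sum w A = 0"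
    and w_supp: "\<forall>a\<in>A. a \<noteq> \<beta> \<longrightarrow> w a \<noteq> 0 \<longrightarrow> 0 < \<nu> a"
    and w_moment: "lin_comb A w = 0 \<or> 0 < lin_comb A \<nu>"
  obtains \<epsilon> where "0 < \<epsilon>" "(\<lambda>a. \<nu> a + \<epsilon> * w a) \<in> moment_cone A \<beta>"
    "(\<lambda>a. \<nu> a - \<epsilon> * w a) \<in> moment_cone A \<beta>"
proof -
  have \<nu>_out: "\<forall>a. a \<notin> A \<longrightarrow> \<nu> a = 0" and \<nu>_nn: "\<forall>a\<in>A. a \<noteq> \<beta> \<longrightarrow> 0 \<le> \<nu> a"
    and \<nu>_sum: "sum \<nu> A = 0" and \<nu>_moment: "0 \<le> lin_comb A \<nu>"
    using \<nu> by (auto simp: moment_cone_def Ncone_def)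
  have "\<forall>\<^sub>F \<epsilon> in at_right 0. 0 < \<epsilon> \<and> (\<forall>a\<in>A. a \<noteq> \<beta> \<longrightarrow> \<bar>\<epsilon> * w a\<bar> \<le> \<nu> a)
      \<and> \<bar>\<epsilon> * lin_comb A w\<bar> \<le> lin_comb A \<nu>" (is "\<forall>\<^sub>F \<epsilon> in _. ?small \<epsilon>")
  proof (intro eventually_conj eventually_at_right_less eventually_ball_finite[OF fin] ballI)
    fix a assume "a \<in> A"
    with w_supp \<nu>_nn show "\<forall>\<^sub>F \<epsilon> in at_right 0. a \<noteq> \<beta> \<longrightarrow> \<bar>\<epsilon> * w a\<bar> \<le> \<nu> a"
      by (cases "a = \<beta>") (auto intro: eventually_abs_mult_le)
  next
    show "\<forall>\<^sub>F \<epsilon> in at_right 0. \<bar>\<epsilon> * lin_comb A w\<bar> \<le> lin_comb A \<nu>"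
      using w_moment \<nu>_moment by (intro eventually_abs_mult_le) auto
  qed
  then have "\<exists>\<epsilon>. ?small \<epsilon>"
    by (rule eventually_happens'[rotated]) simp
  then obtain \<epsilon> where \<epsilon>: "0 < \<epsilon>" "\<forall>a\<in>A. a \<noteq> \<beta> \<longrightarrow> \<bar>\<epsilon> * w a\<bar> \<le> \<nu> a"
    "\<bar>\<epsilon> * lin_comb A w\<bar> \<le> lin_comb A \<nu>"
    by blast
  have "(\<lambda>a. \<nu> a + s * w a) \<in> moment_cone A \<beta>" if s: "\<bar>s\<bar> = \<epsilon>" for s
  proof -
    have "0 \<le> \<nu> a + s * w a" if "a \<in> A" "a \<noteq> \<beta>" for a
      using \<epsilon>(2) that s abs_ge_minus_self[of "s * w a"] by (auto simp: abs_mult)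
    moreover have "sum (\<lambda>a. \<nu> a + s * w a) A = 0"
      using sum_lincomb[of 1 \<nu> s w A] \<nu>_sum w_sum by simp
    moreover have "0 \<le> lin_comb A (\<lambda>a. \<nu> a + s * w a)"
      using lin_comb_lincomb[of A 1 \<nu> s w] \<epsilon>(3) s abs_ge_minus_self[of "s * lin_comb A w"]
      by (auto simp: abs_mult)
    ultimately show ?thesis
      using \<nu>_out w_out by (simp add: moment_cone_def Ncone_def)
  qed
  from this[of \<epsilon>] this[of "- \<epsilon>"] \<epsilon>(1) show ?thesis
    by (intro that[of \<epsilon>]) simp_all
qed

lemma not_indecomposable_in_moment_cone:
  assumes "finite A" "\<nu> \<in> moment_cone A \<beta>"
    and "\<forall>a. a \<notin> A \<longrightarrow> w a = 0" "sum w A = 0"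
    and "\<forall>a\<in>A. a \<noteq> \<beta> \<longrightarrow> w a \<noteq> 0 \<longrightarrow> 0 < \<nu> a"
    and "lin_comb A w = 0 \<or> 0 < lin_comb A \<nu>"
    and x: "\<nu> x \<noteq> 0" "w x = 0" and y: "w y \<noteq> 0"
  shows "\<not> indecomposable_in (moment_cone A \<beta>) \<nu>"
proof -
  obtain \<epsilon> where "0 < \<epsilon>" "(\<lambda>a. \<nu> a + \<epsilon> * w a) \<in> moment_cone A \<beta>"
    "(\<lambda>a. \<nu> a - \<epsilon> * w a) \<in> moment_cone A \<beta>"
    using moment_cone_perturbation[OF assms(1-6)] .
  with x y show ?thesis
    by (intro not_indecomposable_if_perturbable[where w = "\<lambda>a. \<epsilon> * w a" and x = x and y = y]) auto
qed

lemma convex_comb_nonneg_eq_0D: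
  fixes x y t :: real
  assumes "t \<in> {0<..<1}" "0 \<le> x" "0 \<le> y" "(1 - t) * x + t * y = 0"
  shows "x = 0"
  using assms by (smt (verit, best) greaterThanLessThan_iff mult_nonneg_nonneg mult_pos_pos)

lemma seg_pt_moment_cone_zero_entry:
  assumes "\<mu> \<in> moment_cone A \<beta>" "\<mu>' \<in> moment_cone A \<beta>" "t \<in> {0<..<1}"
    and "a \<noteq> \<beta>" "seg_pt \<mu> \<mu>' t a = 0"
  shows "\<mu> a = 0"
  using assms convex_comb_nonneg_eq_0D[of t "\<mu> a" "\<mu>' a"]
  by (cases "a \<in> A") (auto simp: moment_cone_def Ncone_def seg_pt_def)

lemma seg_pt_moment_cone_zero_moment:
  assumes "\<mu> \<in> moment_cone A \<beta>" "\<mu>' \<in> moment_cone A \<beta>" "t \<in> {0<..<1}"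
    and "lin_comb A (seg_pt \<mu> \<mu>' t) = 0"
  shows "lin_comb A \<mu> = 0"
  using assms convex_comb_nonneg_eq_0D[of t "lin_comb A \<mu>" "lin_comb A \<mu>'"]
  by (simp add: moment_cone_def seg_pt_def lin_comb_lincomb)

definition two_point_circuit :: "real \<Rightarrow> real \<Rightarrow> real \<Rightarrow> real" where
  "two_point_circuit b c = (\<lambda>a. if a = c then 1 else if a = b then -1 else 0)"

definition three_point_circuit :: "real \<Rightarrow> real \<Rightarrow> real \<Rightarrow> real \<Rightarrow> real" where
  "three_point_circuit p b c =
     (\<lambda>a. if a = c then (b - p) / (c - p) else if a = p then (c - b) / (c - p) else if a = b then -1 else 0)"

lemma eq_two_point_circuit_multiple:
  assumes "b \<noteq> c" "\<forall>a. a \<notin> {b, c} \<longrightarrow> \<mu> a = 0" "\<mu> b + \<mu> c = 0"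
  shows "\<mu> = (\<lambda>a. \<mu> c * two_point_circuit b c a)"
  using assms by (auto simp: two_point_circuit_def)

lemma eq_three_point_circuit_multiple:
  assumes "p < b" "b < c" "\<forall>a. a \<notin> {p, b, c} \<longrightarrow> \<mu> a = 0"
    and sum: "\<mu> p + \<mu> b + \<mu> c = 0" and moment: "\<mu> p * p + \<mu> b * b + \<mu> c * c = 0"
  shows "\<mu> = (\<lambda>a. - \<mu> b * three_point_circuit p b c a)"
proof -
  have "c - p \<noteq> 0" using assms by simp
  moreover have "\<mu> c * (c - p) = - \<mu> b * (b - p)" "\<mu> p * (c - p) = - \<mu> b * (c - b)"
    using sum moment by algebra+
  ultimately have "\<mu> c = - \<mu> b * ((b - p) / (c - p))" "\<mu> p = - \<mu> b * ((c - b) / (c - p))"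
    by (simp_all add: field_simps)
  with assms show ?thesis by (auto simp: three_point_circuit_def)
qed

lemma two_point_circuit_in_moment_cone:
  assumes "finite A" "b \<in> A" "c \<in> A" "b < c"
  shows "two_point_circuit b c \<in> moment_cone A b"
proof -
  have "sum (two_point_circuit b c) A = 0"
    using assms by (subst sum_two_point_support[of A b c]) (auto simp: two_point_circuit_def)
  moreover have "lin_comb A (two_point_circuit b c) = c - b"
    using assms unfolding lin_comb_real
    by (subst sum_two_point_support[of A b c]) (auto simp: two_point_circuit_def)
  ultimately show ?thesis
    using assms by (auto simp: moment_cone_def Ncone_def two_point_circuit_def)
qed

lemma indecomposable_two_point_circuit:
  assumes "finite A" "b \<in> A" "c \<in> A" "b < c"
  shows "indecomposable_in (moment_cone A b) (two_point_circuit b c)"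
proof (rule indecomposable_inI)
  fix \<mu> \<mu>' t
  assume \<mu>: "\<mu> \<in> moment_cone A b" and \<mu>': "\<mu>' \<in> moment_cone A b" and t: "t \<in> {0<..<1}"
    and seg: "two_point_circuit b c = seg_pt \<mu> \<mu>' t"
  have supp: "\<forall>a. a \<notin> {b, c} \<longrightarrow> \<mu> a = 0"
  proof (intro allI impI)
    fix a assume "a \<notin> {b, c}"
    then have "seg_pt \<mu> \<mu>' t a = 0" unfolding seg[symmetric] by (simp add: two_point_circuit_def)
    with \<open>a \<notin> {b, c}\<close> show "\<mu> a = 0" by (intro seg_pt_moment_cone_zero_entry[OF \<mu> \<mu>' t]) auto
  qed
  moreover have "\<mu> b + \<mu> c = 0"
    using \<mu> assms supp sum_two_point_support[of A b c \<mu>] by (simp add: moment_cone_def Ncone_def)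
  ultimately have "\<mu> = (\<lambda>a. \<mu> c * two_point_circuit b c a)"
    using assms by (intro eq_two_point_circuit_multiple) auto
  then show "\<exists>s. \<mu> = (\<lambda>a. s * two_point_circuit b c a)" ..
qed

lemma three_point_circuit_in_moment_cone:
  assumes "finite A" "p \<in> A" "b \<in> A" "c \<in> A" "p < b" "b < c"
  shows "three_point_circuit p b c \<in> moment_cone A b"
    and "lin_comb A (three_point_circuit p b c) = 0"
proof -
  have "c - p > 0" using assms by simp
  then have weights: "(c - b) / (c - p) + -1 + (b - p) / (c - p) = 0"
    "(c - b) / (c - p) * p + -1 * b + (b - p) / (c - p) * c = 0"
    by (simp_all add: field_simps)
  have "sum (three_point_circuit p b c) A = 0"
    using assms weights
    by (subst sum_three_point_support[of A p b c]) (auto simp: three_point_circuit_def)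
  moreover show moment: "lin_comb A (three_point_circuit p b c) = 0"
    using assms weights unfolding lin_comb_real
    by (subst sum_three_point_support[of A p b c]) (auto simp: three_point_circuit_def)
  ultimately show "three_point_circuit p b c \<in> moment_cone A b"
    using assms by (auto simp: moment_cone_def Ncone_def three_point_circuit_def)
qed

lemma indecomposable_three_point_circuit:
  assumes "finite A" "p \<in> A" "b \<in> A" "c \<in> A" "p < b" "b < c"
  shows "indecomposable_in (moment_cone A b) (three_point_circuit p b c)"
proof (rule indecomposable_inI)
  fix \<mu> \<mu>' t
  assume \<mu>: "\<mu> \<in> moment_cone A b" and \<mu>': "\<mu>' \<in> moment_cone A b" and t: "t \<in> {0<..<1}"
    and seg: "three_point_circuit p b c = seg_pt \<mu> \<mu>' t"
  have supp: "\<forall>a. a \<notin> {p, b, c} \<longrightarrow> \<mu> a = 0"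
  proof (intro allI impI)
    fix a assume "a \<notin> {p, b, c}"
    then have "seg_pt \<mu> \<mu>' t a = 0" unfolding seg[symmetric] by (simp add: three_point_circuit_def)
    with \<open>a \<notin> {p, b, c}\<close> show "\<mu> a = 0" by (intro seg_pt_moment_cone_zero_entry[OF \<mu> \<mu>' t]) auto
  qed
  have "\<mu> p + \<mu> b + \<mu> c = 0"
    using \<mu> assms supp sum_three_point_support[of A p b c \<mu>] by (simp add: moment_cone_def Ncone_def)
  moreover have "\<mu> p * p + \<mu> b * b + \<mu> c * c = 0"
    using seg_pt_moment_cone_zero_moment[OF \<mu> \<mu>' t] three_point_circuit_in_moment_cone(2)[OF assms]
      seg assms supp sum_three_point_support[of A p b c "\<lambda>a. \<mu> a * a"]
    by (simp add: lin_comb_real)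
  ultimately have "\<mu> = (\<lambda>a. - \<mu> b * three_point_circuit p b c a)"
    using assms supp by (intro eq_three_point_circuit_multiple) auto
  then show "\<exists>s. \<mu> = (\<lambda>a. s * three_point_circuit p b c a)" ..
qed

lemma normalized_X_circuit_two_point_circuit:
  assumes "finite A" "b \<in> A" "c \<in> A" "b < c"
  shows "normalized_X_circuit {x::real. 0 \<le> x} A (two_point_circuit b c)"
proof -
  have "two_point_circuit b c c \<noteq> 0" by (simp add: two_point_circuit_def)
  then have "two_point_circuit b c \<noteq> (\<lambda>_. 0)" by force
  moreover have "\<forall>a\<in>A. two_point_circuit b c a < 0 \<longrightarrow> two_point_circuit b c a = -1"
    by (simp add: two_point_circuit_def)
  ultimately show ?thesis
    using assms two_point_circuit_in_moment_cone[OF assms] indecomposable_two_point_circuit[OF assms]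
    unfolding normalized_X_circuit_def X_circuit_def X_circuit_at_nonneg_reals_iff
    by blast
qed

lemma normalized_X_circuit_three_point_circuit:
  assumes "finite A" "p \<in> A" "b \<in> A" "c \<in> A" "p < b" "b < c"
  shows "normalized_X_circuit {x::real. 0 \<le> x} A (three_point_circuit p b c)"
proof -
  have "three_point_circuit p b c b \<noteq> 0" using assms by (simp add: three_point_circuit_def)
  then have nz: "three_point_circuit p b c \<noteq> (\<lambda>_. 0)" by force
  have "0 \<le> (c - b) / (c - p)" "0 \<le> (b - p) / (c - p)" using assms by simp_all
  then have "\<forall>a\<in>A. three_point_circuit p b c a < 0 \<longrightarrow> three_point_circuit p b c a = -1"
    by (simp add: three_point_circuit_def)
  with nz show ?thesis
    using assms three_point_circuit_in_moment_cone(1)[OF assms] indecomposable_three_point_circuit[OF assms]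
    unfolding normalized_X_circuit_def X_circuit_def X_circuit_at_nonneg_reals_iff
    by blast
qed

lemma Ncone_negative_entry:
  assumes "finite A" "\<nu> \<in> Ncone A \<beta>" "\<nu> \<noteq> (\<lambda>_. 0)"
  shows "\<nu> \<beta> < 0"
proof (rule ccontr)
  assume "\<not> \<nu> \<beta> < 0"
  with assms have "\<forall>a\<in>A. 0 \<le> \<nu> a" "sum \<nu> A = 0" "\<forall>a. a \<notin> A \<longrightarrow> \<nu> a = 0"
    by (auto simp: Ncone_def not_less)
  with assms(1) have "\<nu> = (\<lambda>_. 0)"
    by (auto simp: sum_nonneg_eq_0_iff)
  with assms(3) show False ..
qed

lemma three_positive_entries_not_indecomposable:
  assumes "finite A" "\<nu> \<in> moment_cone A \<beta>"
    and "\<beta> \<in> A" "c \<in> A" "d \<in> A" "e \<in> A" "distinct [\<beta>, c, d, e]"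
    and "0 < \<nu> c" "0 < \<nu> d" "0 < \<nu> e"
  shows "\<not> indecomposable_in (moment_cone A \<beta>) \<nu>"
proof -
  \<comment> \<open>moves mass among \<open>c\<close>, \<open>d\<close>, \<open>\<beta>\<close> while preserving total mass and moment\<close>
  define w where "w a = (if a = c then d - \<beta> else 0) + (if a = d then \<beta> - c else 0)
      + (if a = \<beta> then c - d else 0)" for a
  have supp: "\<forall>a. a \<notin> {c, d, \<beta>} \<longrightarrow> w a = 0" by (simp add: w_def)
  have "sum w A = w c + w d + w \<beta>"
    using assms supp by (intro sum_three_point_support) auto
  then have "sum w A = 0" using assms by (simp add: w_def)
  moreover have "lin_comb A w = w c * c + w d * d + w \<beta> * \<beta>"
    using assms supp unfolding lin_comb_real by (intro sum_three_point_support) auto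
  then have "lin_comb A w = 0" using assms by (simp add: w_def algebra_simps)
  moreover have "w e = 0" "w c \<noteq> 0" using assms by (auto simp: w_def)
  ultimately show ?thesis
    using assms supp
    by (intro not_indecomposable_in_moment_cone[where w = w and x = e and y = c]) (auto simp: w_def)
qed

lemma indecomposable_two_positive_entries_zero_moment:
  assumes "finite A" and \<nu>: "\<nu> \<in> moment_cone A \<beta>" "indecomposable_in (moment_cone A \<beta>) \<nu>"
    and "\<beta> \<in> A" "c \<in> A" "d \<in> A" "distinct [\<beta>, c, d]"
    and "0 < \<nu> c" "0 < \<nu> d"
  shows "lin_comb A \<nu> = 0"
proof (rule ccontr)
  assume "lin_comb A \<nu> \<noteq> 0"
  with \<nu>(1) have "0 < lin_comb A \<nu>" by (simp add: moment_cone_def)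
  define w where "w = two_point_circuit \<beta> c"
  have supp: "\<forall>a. a \<notin> {\<beta>, c} \<longrightarrow> w a = 0" by (simp add: w_def two_point_circuit_def)
  have "sum w A = w \<beta> + w c"
    using assms supp by (intro sum_two_point_support) auto
  then have "sum w A = 0" using assms by (simp add: w_def two_point_circuit_def)
  moreover have "w d = 0" "w c \<noteq> 0" using assms by (auto simp: w_def two_point_circuit_def)
  ultimately have "\<not> indecomposable_in (moment_cone A \<beta>) \<nu>"
    using assms supp \<open>0 < lin_comb A \<nu>\<close>
    by (intro not_indecomposable_in_moment_cone[where w = w and x = d and y = c]) auto
  with \<nu>(2) show False by contradiction
qed

lemma between_if_balanced:
  fixes x y p q b :: real
  assumes "0 < x" "0 < y" "p < q" "x * (p - b) + y * (q - b) = 0"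
  shows "p < b" "b < q"
proof (rule_tac [!] ccontr)
  assume "\<not> p < b"
  with assms have "0 \<le> x * (p - b)" "0 < y * (q - b)" by simp_all
  with assms(4) show False by linarith
next
  assume "\<not> b < q"
  with assms have "x * (p - b) < 0" "y * (q - b) \<le> 0" by (simp_all add: mult_pos_neg mult_nonneg_nonpos)
  with assms(4) show False by linarith
qed

lemma moment_cone_three_point_support:
  assumes "finite A" "p \<in> A" "\<beta> \<in> A" "q \<in> A" "p \<noteq> \<beta>" "q \<noteq> \<beta>" and "p < q"
    and \<nu>: "\<nu> \<in> moment_cone A \<beta>" "lin_comb A \<nu> = 0" "\<nu> \<beta> = -1" "0 < \<nu> p" "0 < \<nu> q"
    and supp: "\<forall>a. a \<notin> {p, \<beta>, q} \<longrightarrow> \<nu> a = 0"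
  shows "p < \<beta> \<and> \<beta> < q \<and> \<nu> = three_point_circuit p \<beta> q"
proof -
  have "sum \<nu> A = \<nu> p + \<nu> \<beta> + \<nu> q"
    using assms by (intro sum_three_point_support) auto
  with \<nu>(1) have sum: "\<nu> p + \<nu> \<beta> + \<nu> q = 0" by (simp add: moment_cone_def Ncone_def)
  have "lin_comb A \<nu> = \<nu> p * p + \<nu> \<beta> * \<beta> + \<nu> q * q"
    unfolding lin_comb_real using assms by (intro sum_three_point_support) auto
  with \<nu>(2) have moment: "\<nu> p * p + \<nu> \<beta> * \<beta> + \<nu> q * q = 0" by simp
  with sum \<nu>(3) have "\<nu> p * (p - \<beta>) + \<nu> q * (q - \<beta>) = 0"
    by algebra
  then have between: "p < \<beta>" "\<beta> < q"
    by (rule between_if_balanced[OF \<nu>(4,5) \<open>p < q\<close>])+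
  then have "\<nu> = (\<lambda>a. - \<nu> \<beta> * three_point_circuit p \<beta> q a)"
    using supp sum moment by (intro eq_three_point_circuit_multiple) auto
  with \<nu>(3) between show ?thesis by simp
qed

lemma moment_cone_two_point_support:
  assumes "finite A" and mem: "\<beta> \<in> A" "c \<in> A" "c \<noteq> \<beta>"
    and \<nu>: "\<nu> \<in> moment_cone A \<beta>" "\<nu> \<beta> = -1"
    and supp: "\<forall>a. a \<notin> {\<beta>, c} \<longrightarrow> \<nu> a = 0"
  shows "\<beta> < c \<and> \<nu> = two_point_circuit \<beta> c"
proof -
  have "sum \<nu> A = \<nu> \<beta> + \<nu> c"
    using assms by (intro sum_two_point_support) auto
  with \<nu> have sum: "\<nu> \<beta> + \<nu> c = 0" and c1: "\<nu> c = 1" by (simp_all add: moment_cone_def Ncone_def)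
  have "lin_comb A \<nu> = \<nu> \<beta> * \<beta> + \<nu> c * c"
    unfolding lin_comb_real using assms by (intro sum_two_point_support) auto
  with \<nu> c1 mem(3) have "\<beta> < c" by (simp add: moment_cone_def)
  moreover have "\<nu> = (\<lambda>a. \<nu> c * two_point_circuit \<beta> c a)"
    using supp sum mem(3) by (intro eq_two_point_circuit_multiple) auto
  ultimately show ?thesis using c1 by simp
qed

lemma normalized_indecomposable_in_moment_cone_cases:
  assumes fin: "finite A" and \<beta>: "\<beta> \<in> A"
    and \<nu>: "\<nu> \<in> moment_cone A \<beta>" "indecomposable_in (moment_cone A \<beta>) \<nu>" and norm: "\<nu> \<beta> = -1"
  shows "(\<exists>c\<in>A. \<beta> < c \<and> \<nu> = two_point_circuit \<beta> c)
    \<or> (\<exists>p\<in>A. \<exists>c\<in>A. p < \<beta> \<and> \<beta> < c \<and> \<nu> = three_point_circuit p \<beta> c)"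
proof -
  have out: "\<forall>a. a \<notin> A \<longrightarrow> \<nu> a = 0" and nn: "\<forall>a\<in>A. a \<noteq> \<beta> \<longrightarrow> 0 \<le> \<nu> a"
    and sum: "sum \<nu> A = 0"
    using \<nu>(1) by (auto simp: moment_cone_def Ncone_def)
  have "sum \<nu> (A - {\<beta>}) = 1"
    using sum norm sum.remove[OF fin \<beta>, of \<nu>] by simp
  then obtain c where c: "c \<in> A" "c \<noteq> \<beta>" "0 < \<nu> c"
    using sum_nonpos[of "A - {\<beta>}" \<nu>] by (force simp: not_less)
  show ?thesis
  proof (cases "\<exists>d\<in>A. d \<noteq> \<beta> \<and> d \<noteq> c \<and> 0 < \<nu> d")
    case True
    then obtain d where d: "d \<in> A" "d \<noteq> \<beta>" "d \<noteq> c" "0 < \<nu> d" by blast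
    have moment0: "lin_comb A \<nu> = 0"
      using indecomposable_two_positive_entries_zero_moment[OF fin \<nu> \<beta> c(1) d(1)] c d by simp
    have "\<nu> a = 0" if "a \<notin> {\<beta>, c, d}" for a
    proof (cases "a \<in> A")
      case True
      with that nn three_positive_entries_not_indecomposable[OF fin \<nu>(1) \<beta> c(1) d(1) True] \<nu>(2) c d
      show ?thesis by fastforce
    qed (use out in simp)
    moreover obtain p q where pq: "p < q" "{p, q} = {c, d}"
      using d(3) by (metis linorder_neq_iff insert_commute)
    ultimately have "\<forall>a. a \<notin> {p, \<beta>, q} \<longrightarrow> \<nu> a = 0" "0 < \<nu> p" "0 < \<nu> q"
      "p \<in> A" "q \<in> A" "p \<noteq> \<beta>" "q \<noteq> \<beta>"
      using c d by (auto simp: doubleton_eq_iff)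
    with moment_cone_three_point_support[OF fin _ \<beta> _ _ _ pq(1) \<nu>(1) moment0 norm] show ?thesis
      by blast
  next
    case False
    with nn out c have "\<forall>a. a \<notin> {\<beta>, c} \<longrightarrow> \<nu> a = 0" by fastforce
    with moment_cone_two_point_support[OF fin \<beta> c(1,2) \<nu>(1) norm] c(1) show ?thesis
      by blast
  qed
qed

theorem normalized_X_circuit_nonneg_reals_iff:
  assumes fin: "finite A"
  shows "normalized_X_circuit {x::real. 0 \<le> x} A \<nu> \<longleftrightarrow>
    (\<exists>b\<in>A. \<exists>c\<in>A. b < c \<and> \<nu> = two_point_circuit b c)
    \<or> (\<exists>p\<in>A. \<exists>b\<in>A. \<exists>c\<in>A. p < b \<and> b < c \<and> \<nu> = three_point_circuit p b c)"
proof
  assume "normalized_X_circuit {x::real. 0 \<le> x} A \<nu>"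
  then obtain \<beta> where \<beta>: "\<beta> \<in> A" and \<nu>: "\<nu> \<in> moment_cone A \<beta>" "\<nu> \<noteq> (\<lambda>_. 0)"
    "indecomposable_in (moment_cone A \<beta>) \<nu>" and norm: "\<forall>a\<in>A. \<nu> a < 0 \<longrightarrow> \<nu> a = -1"
    unfolding normalized_X_circuit_def X_circuit_def X_circuit_at_nonneg_reals_iff by blast
  have "\<nu> \<beta> = -1"
    using Ncone_negative_entry[OF fin _ \<nu>(2)] \<nu>(1) norm \<beta> by (simp add: moment_cone_def)
  from normalized_indecomposable_in_moment_cone_cases[OF fin \<beta> \<nu>(1,3) this] \<beta>
  show "(\<exists>b\<in>A. \<exists>c\<in>A. b < c \<and> \<nu> = two_point_circuit b c)
    \<or> (\<exists>p\<in>A. \<exists>b\<in>A. \<exists>c\<in>A. p < b \<and> b < c \<and> \<nu> = three_point_circuit p b c)"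
    by blast
next
  assume "(\<exists>b\<in>A. \<exists>c\<in>A. b < c \<and> \<nu> = two_point_circuit b c)
    \<or> (\<exists>p\<in>A. \<exists>b\<in>A. \<exists>c\<in>A. p < b \<and> b < c \<and> \<nu> = three_point_circuit p b c)"
  then show "normalized_X_circuit {x::real. 0 \<le> x} A \<nu>"
    using normalized_X_circuit_two_point_circuit[OF fin] normalized_X_circuit_three_point_circuit[OF fin]
    by blast
qed

lemma ex_less_pair_image_iff:
  fixes f :: "'a::linorder \<Rightarrow> 'b::linorder"
  assumes "strict_mono_on I f"
  shows "(\<exists>b\<in>f ` I. \<exists>c\<in>f ` I. b < c \<and> P b c) \<longleftrightarrow> (\<exists>j\<in>I. \<exists>k\<in>I. j < k \<and> P (f j) (f k))"
  using strict_mono_on_less[OF assms] by blast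

lemma ex_less_triple_image_iff:
  fixes f :: "'a::linorder \<Rightarrow> 'b::linorder"
  assumes "strict_mono_on I f"
  shows "(\<exists>p\<in>f ` I. \<exists>b\<in>f ` I. \<exists>c\<in>f ` I. p < b \<and> b < c \<and> P p b c) \<longleftrightarrow>
    (\<exists>i\<in>I. \<exists>j\<in>I. \<exists>k\<in>I. i < j \<and> j < k \<and> P (f i) (f j) (f k))"
  using strict_mono_on_less[OF assms] by blast

theorem mainTheorem19:
  fixes m :: nat and \<alpha> :: "nat \<Rightarrow> real" and lam :: "real \<Rightarrow> real"
  assumes mono: "strict_mono_on {1..m} \<alpha>"
  defines "A \<equiv> \<alpha> ` {1..m}" and "X \<equiv> {x::real. x \<ge> 0}"
  shows "normalized_X_circuit X A lam \<longleftrightarrow>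
    (\<exists>j k. 1 \<le> j \<and> j < k \<and> k \<le> m \<and>
        lam = (\<lambda>a. if a = \<alpha> k then 1 else if a = \<alpha> j then -1 else 0))
    \<or> (\<exists>i j k. 1 \<le> i \<and> i < j \<and> j < k \<and> k \<le> m \<and>
        lam = (\<lambda>a. if a = \<alpha> k then (\<alpha> j - \<alpha> i) / (\<alpha> k - \<alpha> i)
                 else if a = \<alpha> i then (\<alpha> k - \<alpha> j) / (\<alpha> k - \<alpha> i)
                 else if a = \<alpha> j then -1 else 0))"
proof -
  have pairs: "(\<exists>j\<in>{1..m}. \<exists>k\<in>{1..m}. j < k \<and> P j k) \<longleftrightarrow> (\<exists>j k. 1 \<le> j \<and> j < k \<and> k \<le> m \<and> P j k)"
    for P :: "nat \<Rightarrow> nat \<Rightarrow> bool"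
    by (auto 0 4 intro: le_trans less_imp_le_nat)
  have triples: "(\<exists>i\<in>{1..m}. \<exists>j\<in>{1..m}. \<exists>k\<in>{1..m}. i < j \<and> j < k \<and> P i j k) \<longleftrightarrow>
      (\<exists>i j k. 1 \<le> i \<and> i < j \<and> j < k \<and> k \<le> m \<and> P i j k)"
    for P :: "nat \<Rightarrow> nat \<Rightarrow> nat \<Rightarrow> bool"
    by (auto 0 4 intro: le_trans less_imp_le_nat)
  show ?thesis
    unfolding X_def A_def normalized_X_circuit_nonneg_reals_iff[OF finite_imageI[OF finite_atLeastAtMost]]
      ex_less_pair_image_iff[OF mono] ex_less_triple_image_iff[OF mono] pairs triples
      two_point_circuit_def three_point_circuit_def ..
qed

end
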